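(* Let $E$ be a locally convex space. Then every bounded subset of $E$ is either tame, or contains a sequence which is an $l^1$-sequence.
   Context: ${\rm eqc}(E^* )$ is the family of equicontinuous weak-star compact subsets of the dual $E^*$. A sequence of real functions $(f_n)$ on a set $X$ is independent if there are $a<b$ with $\bigcap_{n\in P} f_n^{-1}(-\infty,a)\cap\bigcap_{n\in M} f_n^{-1}(b,\infty)\neq\emptyset$ for all finite disjoint $P,M\subseteq\mathbb N$; a bounded family of real functions is tame if it contains no independent sequence. A bounded $B\subseteq E$ is tame if for every $K\in{\rm eqc}(E^* )$ the family $\{\varphi\mapsto\varphi(b)\}_{b\in B}$ of functions on $K$ is tame. A bounded sequence $(x_n)$ in $E$ is an $l^1$-sequence if there exist a continuous seminorm $\rho$ on $E$ and $\delta>0$ with $\delta\sum_{i=1}^n|c_i|\le\rho(\sum_{i=1}^n c_ix_i)$ for all $n$ and real $c_1,\dots,c_n$. *)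

theory Defs
  imports "HOL-Analysis.Analysis"
begin

definition locally_convex :: "'a::real_vector topology \<Rightarrow> bool" where
  "locally_convex T \<longleftrightarrow>
     topspace T = UNIV \<and>
     continuous_map (prod_topology T T) T (\<lambda>(x, y). x + y) \<and>
     continuous_map (prod_topology euclideanreal T) T (\<lambda>(c, x). c *\<^sub>R x) \<and>
     (\<forall>U. openin T U \<and> 0 \<in> U \<longrightarrow> (\<exists>V. openin T V \<and> convex V \<and> 0 \<in> V \<and> V \<subseteq> U))"

definition tvs_bounded :: "'a::real_vector topology \<Rightarrow> 'a set \<Rightarrow> bool" where
  "tvs_bounded T B \<longleftrightarrow>
     (\<forall>U. openin T U \<and> 0 \<in> U \<longrightarrow> (\<exists>t>0. \<forall>s>t. B \<subseteq> (\<lambda>x. s *\<^sub>R x) ` U))"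

definition seminorm :: "('a::real_vector \<Rightarrow> real) \<Rightarrow> bool" where
  "seminorm p \<longleftrightarrow> (\<forall>x y. p (x + y) \<le> p x + p y) \<and> (\<forall>c x. p (c *\<^sub>R x) = \<bar>c\<bar> * p x)"

definition continuous_seminorm :: "'a::real_vector topology \<Rightarrow> ('a \<Rightarrow> real) \<Rightarrow> bool" where
  "continuous_seminorm T p \<longleftrightarrow> seminorm p \<and> continuous_map T euclideanreal p"

definition tvs_dual :: "'a::real_vector topology \<Rightarrow> ('a \<Rightarrow> real) set" where
  "tvs_dual T = {\<phi>. linear \<phi> \<and> continuous_map T euclideanreal \<phi>}"

definition equicontinuous_set :: "'a::real_vector topology \<Rightarrow> ('a \<Rightarrow> real) set \<Rightarrow> bool" where
  "equicontinuous_set T K \<longleftrightarrow>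
     (\<forall>x\<in>topspace T. \<forall>\<epsilon>>0. \<exists>U. openin T U \<and> x \<in> U \<and>
        (\<forall>\<phi>\<in>K. \<forall>y\<in>U. \<bar>\<phi> y - \<phi> x\<bar> < \<epsilon>))"

text \<open>The weak-star topology on E*
  is the subspace topology of the topology of pointwise convergence, i.e. the product
  topology on ('a => real) (the standard topology of the function type).\<close>
definition eqc :: "'a::real_vector topology \<Rightarrow> ('a \<Rightarrow> real) set set" where
  "eqc T = {K. K \<subseteq> tvs_dual T \<and> equicontinuous_set T K \<and> compact K}"

definition independent_seq :: "'x set \<Rightarrow> (nat \<Rightarrow> 'x \<Rightarrow> real) \<Rightarrow> bool" where
  "independent_seq X f \<longleftrightarrow>
     (\<exists>a b. a < b \<and>
        (\<forall>P M. finite P \<and> finite M \<and> P \<inter> M = {} \<longrightarrow>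
           X \<inter> (\<Inter>n\<in>P. {x. f n x < a}) \<inter> (\<Inter>n\<in>M. {x. b < f n x}) \<noteq> {}))"

definition tame_family :: "'x set \<Rightarrow> ('x \<Rightarrow> real) set \<Rightarrow> bool" where
  "tame_family X F \<longleftrightarrow> \<not> (\<exists>f. range f \<subseteq> F \<and> independent_seq X f)"

definition tame_set :: "'a::real_vector topology \<Rightarrow> 'a set \<Rightarrow> bool" where
  "tame_set T B \<longleftrightarrow> tvs_bounded T B \<and>
     (\<forall>K\<in>eqc T. tame_family K ((\<lambda>b \<phi>. \<phi> b) ` B))"

definition l1_sequence :: "'a::real_vector topology \<Rightarrow> (nat \<Rightarrow> 'a) \<Rightarrow> bool" where
  "l1_sequence T x \<longleftrightarrow> tvs_bounded T (range x) \<and>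
     (\<exists>\<rho> \<delta>. continuous_seminorm T \<rho> \<and> \<delta> > 0 \<and>
        (\<forall>n c. \<delta> * (\<Sum>i<n. \<bar>c i\<bar>) \<le> \<rho> (\<Sum>i<n. c i *\<^sub>R x i)))"

end

theory Submission
  imports Defs
begin

text \<open>If tameness fails, some K in eqc(E*) carries an independent sequence of evaluations
  at points x n of B, with thresholds a < b. For finitely many coefficients c i, independence
  yields \<phi>1, \<phi>2 in K separating the indices with positive and negative c i on opposite sides
  of [a, b]; then (\<phi>1 - \<phi>2)(\<Sum> c i x i) \<ge> (b - a) \<Sum> |c i|. The supremum of |\<phi>| over K is a
  continuous seminorm (K is pointwise bounded by compactness and equicontinuous), so x is an
  l1-sequence with \<delta> = (b - a) / 2.\<close>

definition sup_seminorm :: "('a \<Rightarrow> real) set \<Rightarrow> 'a \<Rightarrow> real" where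
  "sup_seminorm K y = (SUP \<phi>\<in>K. \<bar>\<phi> y\<bar>)"

lemma bdd_above_abs_eval_compact:
  assumes "compact (K :: ('a \<Rightarrow> real) set)"
  shows "bdd_above ((\<lambda>\<phi>. \<bar>\<phi> y\<bar>) ` K)"
proof -
  have "continuous_on K (\<lambda>\<phi>::'a \<Rightarrow> real. \<phi> y)"
    by (rule continuous_on_subset[OF continuous_on_product_coordinates]) simp
  then have "bounded ((\<lambda>\<phi>. \<phi> y) ` K)"
    using assms by (intro compact_imp_bounded compact_continuous_image)
  then have "bounded ((\<lambda>\<phi>. \<bar>\<phi> y\<bar>) ` K)"
    by (auto simp: bounded_iff)
  then show ?thesis
    by (rule bounded_imp_bdd_above)
qed

context
  fixes K :: "('a::real_vector \<Rightarrow> real) set"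
  assumes pointwise_bdd: "\<And>y. bdd_above ((\<lambda>\<phi>. \<bar>\<phi> y\<bar>) ` K)"
    and nonempty: "K \<noteq> {}"
begin

lemma abs_le_sup_seminorm: "\<phi> \<in> K \<Longrightarrow> \<bar>\<phi> y\<bar> \<le> sup_seminorm K y"
  unfolding sup_seminorm_def by (rule cSUP_upper[OF _ pointwise_bdd])

lemma sup_seminorm_least: "(\<And>\<phi>. \<phi> \<in> K \<Longrightarrow> \<bar>\<phi> y\<bar> \<le> r) \<Longrightarrow> sup_seminorm K y \<le> r"
  unfolding sup_seminorm_def by (rule cSUP_least[OF nonempty])

lemma sup_seminorm_nonneg: "0 \<le> sup_seminorm K y"
proof -
  obtain \<phi> where "\<phi> \<in> K"
    using nonempty by blast
  then show ?thesis
    using abs_le_sup_seminorm[of \<phi> y] by linarith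
qed

lemma abs_sup_seminorm_diff_le:
  assumes "\<And>\<phi>. \<phi> \<in> K \<Longrightarrow> \<bar>\<phi> y - \<phi> x\<bar> \<le> e"
  shows "\<bar>sup_seminorm K y - sup_seminorm K x\<bar> \<le> e"
proof -
  have "sup_seminorm K y \<le> sup_seminorm K x + e"
    by (rule sup_seminorm_least) (smt (verit) assms abs_le_sup_seminorm)
  moreover have "sup_seminorm K x \<le> sup_seminorm K y + e"
    by (rule sup_seminorm_least) (smt (verit) assms abs_le_sup_seminorm)
  ultimately show ?thesis
    by linarith
qed

lemma seminorm_sup_seminorm:
  assumes "\<And>\<phi>. \<phi> \<in> K \<Longrightarrow> linear \<phi>"
  shows "seminorm (sup_seminorm K)"
proof -
  have subadditive: "sup_seminorm K (x + y) \<le> sup_seminorm K x + sup_seminorm K y" for x y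
  proof (rule sup_seminorm_least)
    fix \<phi> assume "\<phi> \<in> K"
    then show "\<bar>\<phi> (x + y)\<bar> \<le> sup_seminorm K x + sup_seminorm K y"
      using assms linear_add abs_le_sup_seminorm[of \<phi>] by (smt (verit))
  qed
  have scale_le: "sup_seminorm K (c *\<^sub>R x) \<le> \<bar>c\<bar> * sup_seminorm K x" for c x
  proof (rule sup_seminorm_least)
    fix \<phi> assume "\<phi> \<in> K"
    then show "\<bar>\<phi> (c *\<^sub>R x)\<bar> \<le> \<bar>c\<bar> * sup_seminorm K x"
      using assms abs_le_sup_seminorm[of \<phi> x]
      by (simp add: linear_scale abs_mult mult_left_mono)
  qed
  have "sup_seminorm K (c *\<^sub>R x) = \<bar>c\<bar> * sup_seminorm K x" for c x
  proof (cases "c = 0")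
    case True
    then show ?thesis
      using scale_le[of 0 x] sup_seminorm_nonneg[of "0 *\<^sub>R x"] by simp
  next
    case False
    have "sup_seminorm K x = sup_seminorm K (inverse c *\<^sub>R (c *\<^sub>R x))"
      using False by simp
    also have "\<dots> \<le> \<bar>inverse c\<bar> * sup_seminorm K (c *\<^sub>R x)"
      by (rule scale_le)
    finally have "\<bar>c\<bar> * sup_seminorm K x \<le> sup_seminorm K (c *\<^sub>R x)"
      using False by (simp add: abs_inverse field_simps)
    then show ?thesis
      using scale_le[of c x] by linarith
  qed
  then show ?thesis
    unfolding seminorm_def using subadditive by blast
qed

lemma continuous_map_sup_seminorm:
  assumes "equicontinuous_set T K"
  shows "continuous_map T euclideanreal (sup_seminorm K)"
proof -
  have "\<exists>U. openin T U \<and> x \<in> U \<and> (\<forall>y\<in>U. \<bar>sup_seminorm K y - sup_seminorm K x\<bar> < \<epsilon>)"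
    if x: "x \<in> topspace T" and "\<epsilon> > 0" for x \<epsilon>
  proof -
    obtain U where "openin T U" "x \<in> U" and U: "\<forall>\<phi>\<in>K. \<forall>y\<in>U. \<bar>\<phi> y - \<phi> x\<bar> < \<epsilon> / 2"
      using assms x \<open>\<epsilon> > 0\<close> unfolding equicontinuous_set_def by (meson half_gt_zero)
    moreover have "\<bar>sup_seminorm K y - sup_seminorm K x\<bar> < \<epsilon>" if "y \<in> U" for y
    proof -
      have "\<bar>sup_seminorm K y - sup_seminorm K x\<bar> \<le> \<epsilon> / 2"
        using U that by (intro abs_sup_seminorm_diff_le) (simp add: less_imp_le)
      then show ?thesis
        using \<open>\<epsilon> > 0\<close> by linarith
    qed
    ultimately show ?thesis
      by blast
  qed
  then show ?thesis
    using Met_TC.continuous_map_to_metric[of T "sup_seminorm K"]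
    by (simp add: dist_real_def abs_minus_commute)
qed

end

lemma continuous_seminorm_sup_seminorm:
  assumes "K \<in> eqc T" and "K \<noteq> {}"
  shows "continuous_seminorm T (sup_seminorm K)"
proof -
  have "compact K" and "equicontinuous_set T K" and "\<And>\<phi>. \<phi> \<in> K \<Longrightarrow> linear \<phi>"
    using assms(1) by (auto simp: eqc_def tvs_dual_def)
  moreover have "\<And>y. bdd_above ((\<lambda>\<phi>. \<bar>\<phi> y\<bar>) ` K)"
    using \<open>compact K\<close> by (rule bdd_above_abs_eval_compact)
  ultimately show ?thesis
    unfolding continuous_seminorm_def
    using seminorm_sup_seminorm continuous_map_sup_seminorm assms(2) by blast
qed

lemma independent_eval_seq_imp_l1_estimate:
  fixes x :: "nat \<Rightarrow> 'a::real_vector"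
  assumes lin: "\<And>\<phi>. \<phi> \<in> K \<Longrightarrow> linear \<phi>"
    and ind: "\<And>P M. finite P \<Longrightarrow> finite M \<Longrightarrow> P \<inter> M = {} \<Longrightarrow>
      \<exists>\<phi>\<in>K. (\<forall>i\<in>P. \<phi> (x i) < a) \<and> (\<forall>i\<in>M. b < \<phi> (x i))"
    and sup_abs: "\<And>\<phi> y. \<phi> \<in> K \<Longrightarrow> \<bar>\<phi> y\<bar> \<le> \<rho> y"
  shows "(b - a) / 2 * (\<Sum>i<n. \<bar>c i\<bar>) \<le> \<rho> (\<Sum>i<n. c i *\<^sub>R x i)"
proof -
  define Pos where "Pos = {i. i < n \<and> c i > 0}"
  define Neg where "Neg = {i. i < n \<and> c i < 0}"
  have "finite Pos" "finite Neg" "Pos \<inter> Neg = {}"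
    unfolding Pos_def Neg_def by auto
  obtain \<phi>1 where "\<phi>1 \<in> K" and \<phi>1: "\<forall>i\<in>Neg. \<phi>1 (x i) < a" "\<forall>i\<in>Pos. b < \<phi>1 (x i)"
    using ind[of Neg Pos] \<open>finite Pos\<close> \<open>finite Neg\<close> \<open>Pos \<inter> Neg = {}\<close> by blast
  obtain \<phi>2 where "\<phi>2 \<in> K" and \<phi>2: "\<forall>i\<in>Pos. \<phi>2 (x i) < a" "\<forall>i\<in>Neg. b < \<phi>2 (x i)"
    using ind[of Pos Neg] \<open>finite Pos\<close> \<open>finite Neg\<close> \<open>Pos \<inter> Neg = {}\<close> by blast
  have term_bound: "\<bar>c i\<bar> * (b - a) \<le> c i * (\<phi>1 (x i) - \<phi>2 (x i))" if "i < n" for i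
  proof (cases "c i > 0")
    case True
    then have "b - a \<le> \<phi>1 (x i) - \<phi>2 (x i)"
      using that \<phi>1 \<phi>2 by (fastforce simp: Pos_def)
    then show ?thesis
      using True by (simp add: mult_left_mono)
  next
    case False
    have "c i < 0 \<Longrightarrow> b - a \<le> \<phi>2 (x i) - \<phi>1 (x i)"
      using that \<phi>1 \<phi>2 by (fastforce simp: Neg_def)
    then have "- c i * (b - a) \<le> - c i * (\<phi>2 (x i) - \<phi>1 (x i))"
      using False by (cases "c i = 0") (auto intro: mult_left_mono)
    then show ?thesis
      using False by (simp add: algebra_simps)
  qed
  let ?y = "\<Sum>i<n. c i *\<^sub>R x i"
  have "(\<Sum>i<n. \<bar>c i\<bar>) * (b - a) = (\<Sum>i<n. \<bar>c i\<bar> * (b - a))"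
    by (simp add: sum_distrib_right)
  also have "\<dots> \<le> (\<Sum>i<n. c i * (\<phi>1 (x i) - \<phi>2 (x i)))"
    by (rule sum_mono) (simp add: term_bound)
  also have "\<dots> = \<phi>1 ?y - \<phi>2 ?y"
    using lin[OF \<open>\<phi>1 \<in> K\<close>] lin[OF \<open>\<phi>2 \<in> K\<close>]
    by (simp add: linear_sum linear_scale sum_subtractf right_diff_distrib)
  also have "\<dots> \<le> 2 * \<rho> ?y"
    using sup_abs[OF \<open>\<phi>1 \<in> K\<close>, of ?y] sup_abs[OF \<open>\<phi>2 \<in> K\<close>, of ?y] by linarith
  finally show ?thesis
    by (simp add: field_simps)
qed

lemma tvs_bounded_subset: "tvs_bounded T B \<Longrightarrow> A \<subseteq> B \<Longrightarrow> tvs_bounded T A"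
  unfolding tvs_bounded_def by (meson order_trans)

lemma independent_seq_iff:
  "independent_seq X f \<longleftrightarrow> (\<exists>a b. a < b \<and> (\<forall>P M. finite P \<and> finite M \<and> P \<inter> M = {} \<longrightarrow>
     (\<exists>\<xi>\<in>X. (\<forall>n\<in>P. f n \<xi> < a) \<and> (\<forall>n\<in>M. b < f n \<xi>))))"
proof -
  have "X \<inter> (\<Inter>n\<in>P. {\<xi>. f n \<xi> < a}) \<inter> (\<Inter>n\<in>M. {\<xi>. b < f n \<xi>}) \<noteq> {} \<longleftrightarrow>
      (\<exists>\<xi>\<in>X. (\<forall>n\<in>P. f n \<xi> < a) \<and> (\<forall>n\<in>M. b < f n \<xi>))" for a b P M
    by (auto simp: ex_in_conv[symmetric])
  then show ?thesis
    unfolding independent_seq_def by presburger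
qed

lemma l1_sequence_if_independent_on_eqc:
  assumes K: "K \<in> eqc T" and "tvs_bounded T (range x)"
    and "independent_seq K (\<lambda>n \<phi>. \<phi> (x n))"
  shows "l1_sequence T x"
proof -
  obtain a b where "a < b" and ind: "\<And>P M. finite P \<Longrightarrow> finite M \<Longrightarrow> P \<inter> M = {} \<Longrightarrow>
      \<exists>\<phi>\<in>K. (\<forall>i\<in>P. \<phi> (x i) < a) \<and> (\<forall>i\<in>M. b < \<phi> (x i))"
    using assms(3) unfolding independent_seq_iff by auto
  have "K \<noteq> {}"
    using ind[of "{}" "{}"] by blast
  have lin: "\<And>\<phi>. \<phi> \<in> K \<Longrightarrow> linear \<phi>"
    using K by (auto simp: eqc_def tvs_dual_def)
  have "\<And>y. bdd_above ((\<lambda>\<phi>. \<bar>\<phi> y\<bar>) ` K)"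
    using K bdd_above_abs_eval_compact by (auto simp: eqc_def)
  then have sup_abs: "\<And>\<phi> y. \<phi> \<in> K \<Longrightarrow> \<bar>\<phi> y\<bar> \<le> sup_seminorm K y"
    using \<open>K \<noteq> {}\<close> by (rule abs_le_sup_seminorm)
  have "(b - a) / 2 * (\<Sum>i<n. \<bar>c i\<bar>) \<le> sup_seminorm K (\<Sum>i<n. c i *\<^sub>R x i)" for n c
    using lin ind sup_abs by (rule independent_eval_seq_imp_l1_estimate)
  then show ?thesis
    unfolding l1_sequence_def
    using assms(2) continuous_seminorm_sup_seminorm[OF K \<open>K \<noteq> {}\<close>] \<open>a < b\<close>
    by (intro conjI exI[of _ "sup_seminorm K"] exI[of _ "(b - a) / 2"]) auto
qed

theorem theorem6p2:
  fixes T :: "'a::real_vector topology" and B :: "'a set"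
  assumes "locally_convex T" and "tvs_bounded T B"
  shows "tame_set T B \<or> (\<exists>x. range x \<subseteq> B \<and> l1_sequence T x)"
proof (cases "tame_set T B")
  case False
  then obtain K f where K: "K \<in> eqc T" and f: "range f \<subseteq> (\<lambda>b \<phi>. \<phi> b) ` B"
    and "independent_seq K f"
    using assms(2) unfolding tame_set_def tame_family_def by blast
  have "\<forall>n. \<exists>b. b \<in> B \<and> f n = (\<lambda>\<phi>. \<phi> b)"
    using f by blast
  then obtain x where "\<forall>n. x n \<in> B \<and> f n = (\<lambda>\<phi>. \<phi> (x n))"
    by (metis choice)
  then have "range x \<subseteq> B" and "f = (\<lambda>n \<phi>. \<phi> (x n))"
    by auto
  then have "l1_sequence T x"
    using l1_sequence_if_independent_on_eqc[OF K] tvs_bounded_subset[OF assms(2)]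
      \<open>independent_seq K f\<close> by blast
  with \<open>range x \<subseteq> B\<close> show ?thesis
    by blast
qed simp

end
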